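(* Let $p\ge1$, $0<\alpha\le1$, and let $X$ be a random vertex of $\{0,\dots,p\}^2$ with $$\mathbb{P}[X=(i,j)]=\prod_{k\in\{i,j\}}\binom{p}{k}\frac{B(\alpha+k,\alpha+p-k)}{B(\alpha,\alpha)}.$$ Then $p^{-2}\lesssim\mathbb{P}[X=(i,j)]\lesssim p^{-2\alpha}$ for all $(i,j)\in\{0,\dots,p\}^2$.
   Context: $B(\cdot,\cdot)$ is the beta function. $f(p)\lesssim g(p)$ means $f(p)\le c\,g(p)$ for a constant $c>0$ not depending on $p$ (or on $(i,j)$). *)

theory Defs
  imports "HOL-Analysis.Analysis"
begin

definition betabin :: "nat \<Rightarrow> real \<Rightarrow> nat \<Rightarrow> real" where
  "betabin p \<alpha> k = real (p choose k) * Beta (\<alpha> + real k) (\<alpha> + real p - real k) / Beta \<alpha> \<alpha>"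

definition probX :: "nat \<Rightarrow> real \<Rightarrow> nat \<Rightarrow> nat \<Rightarrow> real" where
  "probX p \<alpha> i j = betabin p \<alpha> i * betabin p \<alpha> j"

end

theory Submission
  imports Defs
begin

text \<open>
  Write g_a(n) = Gamma(n + a) / n!, so that the beta-binomial weight of k is
  g_a(k) g_a(p - k) / (B(a, a) g_2a(p)). Wendel's inequality
  x (x + s) powr (s - 1) \<le> Gamma(x + s) / Gamma(x) \<le> x powr s for 0 \<le> s \<le> 1, a
  consequence of the log-convexity of Gamma, shows that g_a(n) and g_2a(p) agree with
  n powr (a - 1) and p powr (2a - 1) up to absolute constants. For a \<le> 1 the sequence
  g_a decreases, so both factors of the numerator are at least g_a(p), which gives the
  lower bound of order 1/p. For the upper bound, the factor with the larger index (at
  least p/2) is O(p powr (a - 1)) and the other one is at most g_a(0) = Gamma(a), which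
  gives p powr -a. The two coordinates of X are independent, so both bounds square.
\<close>

lemma Gamma_real_plus1: "0 < x \<Longrightarrow> Gamma (x + 1) = x * Gamma (x::real)"
  by (rule Gamma_plus1) (auto elim!: nonpos_Ints_cases)

lemma fact_eq_Gamma: "n \<ge> 1 \<Longrightarrow> (fact n :: real) = real n * Gamma (real n)"
  using Gamma_fact[of n, where 'a=real] Gamma_real_plus1[of "real n"] by (simp add: add.commute)

lemma Beta_real_pos: "0 < a \<Longrightarrow> 0 < b \<Longrightarrow> 0 < Beta a (b::real)"
  unfolding Beta_def by simp

lemma Gamma_add_le_powr:
  fixes x s :: real
  assumes x: "0 < x" and s: "0 \<le> s" "s \<le> 1"
  shows "Gamma (x + s) \<le> x powr s * Gamma x"
proof -
  have "ln (Gamma ((1 - s) *\<^sub>R x + s *\<^sub>R (x + 1)))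
      \<le> (1 - s) * ln (Gamma x) + s * ln (Gamma (x + 1))"
    using convex_onD[OF log_convex_Gamma_real, of s x "x + 1"] x s by simp
  also have "ln (Gamma (x + 1)) = ln x + ln (Gamma x)"
    using x Gamma_real_pos[OF x] by (simp add: Gamma_real_plus1 ln_mult del: Gamma_real_pos)
  finally have "ln (Gamma (x + s)) \<le> ln (x powr s * Gamma x)"
    using x Gamma_real_pos[OF x] by (simp add: algebra_simps ln_mult ln_powr del: Gamma_real_pos)
  then show ?thesis
    using x s by (subst (asm) ln_le_cancel_iff) auto
qed

lemma Gamma_add_ge_powr:
  fixes x s :: real
  assumes x: "0 < x" and s: "0 \<le> s" "s \<le> 1" "s \<le> x"
  shows "x powr s * Gamma x \<le> 2 * Gamma (x + s)"
proof -
  have "x * Gamma x \<le> (x + s) powr (1 - s) * Gamma (x + s)"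
    using Gamma_add_le_powr[of "x + s" "1 - s"] Gamma_real_plus1[OF x] x s by simp
  also have "(x + s) powr (1 - s) \<le> (2 * x) powr (1 - s)"
    using x s by (intro powr_mono2) auto
  also have "(2 * x) powr (1 - s) \<le> 2 * x powr (1 - s)"
    using x s powr_mono[of "1 - s" 1 2] by (auto simp: powr_mult)
  finally have "x powr (1 - s) * x powr s * Gamma x \<le> x powr (1 - s) * (2 * Gamma (x + s))"
    using x s by (simp add: mult_right_mono flip: powr_add mult.assoc)
  then show ?thesis
    using x by (simp add: mult.assoc)
qed

definition gamma_over_fact :: "real \<Rightarrow> nat \<Rightarrow> real" where
  "gamma_over_fact a n = Gamma (real n + a) / fact n"

lemma gamma_over_fact_pos: "0 < a \<Longrightarrow> 0 < gamma_over_fact a n"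
  unfolding gamma_over_fact_def by simp

lemma gamma_over_fact_0 [simp]: "gamma_over_fact a 0 = Gamma a"
  by (simp add: gamma_over_fact_def)

lemma gamma_over_fact_Suc:
  "0 < a \<Longrightarrow> gamma_over_fact a (Suc n) = (real n + a) / (real n + 1) * gamma_over_fact a n"
  using Gamma_real_plus1[of "real n + a"] by (simp add: gamma_over_fact_def add_ac)

lemma gamma_over_fact_antimono:
  assumes "0 < a" "a \<le> 1" "m \<le> n"
  shows "gamma_over_fact a n \<le> gamma_over_fact a m"
proof -
  have "gamma_over_fact a (Suc k) \<le> gamma_over_fact a k" for k
    unfolding gamma_over_fact_Suc[OF assms(1)]
    by (rule mult_left_le_one_le) (use assms gamma_over_fact_pos[of a k] in auto)
  then have "decseq (gamma_over_fact a)"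
    by (rule decseq_SucI)
  then show ?thesis
    using assms(3) by (simp add: decseq_def)
qed

lemma gamma_over_fact_le_powr:
  assumes "0 \<le> a" "a \<le> 1" "n \<ge> 1"
  shows "gamma_over_fact a n \<le> real n powr (a - 1)"
proof -
  have "Gamma (real n + a) \<le> real n powr a * Gamma (real n)"
    using Gamma_add_le_powr[of "real n" a] assms by simp
  then show ?thesis
    using assms by (simp add: gamma_over_fact_def fact_eq_Gamma powr_diff field_simps)
qed

lemma gamma_over_fact_ge_powr:
  assumes "0 \<le> a" "a \<le> 1" "n \<ge> 1"
  shows "real n powr (a - 1) \<le> 2 * gamma_over_fact a n"
proof -
  have "real n powr a * Gamma (real n) \<le> 2 * Gamma (real n + a)"
    using Gamma_add_ge_powr[of "real n" a] assms by simp
  then show ?thesis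
    using assms by (simp add: gamma_over_fact_def fact_eq_Gamma powr_diff field_simps)
qed

lemma gamma_over_fact_double:
  assumes "0 < a"
  shows "gamma_over_fact (2 * a) n = Gamma (real n + a + a) / Gamma (real n + a) * gamma_over_fact a n"
proof -
  have "Gamma (real n + a) > 0"
    using assms by simp
  then show ?thesis
    by (simp add: gamma_over_fact_def add.assoc)
qed

lemma gamma_over_fact_double_le_powr:
  assumes a: "0 < a" "a \<le> 1" and p: "p \<ge> 1"
  shows "gamma_over_fact (2 * a) p \<le> 2 * real p powr (2 * a - 1)"
proof -
  have "Gamma (real p + a + a) / Gamma (real p + a) \<le> (real p + a) powr a"
    using Gamma_add_le_powr[of "real p + a" a] a by (simp add: divide_le_eq)
  also have "\<dots> \<le> (2 * real p) powr a"
    using a p by (intro powr_mono2) auto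
  also have "\<dots> \<le> 2 * real p powr a"
    using a powr_mono[of a 1 2] by (simp add: powr_mult mult_right_mono)
  finally have "gamma_over_fact (2 * a) p \<le> 2 * real p powr a * real p powr (a - 1)"
    unfolding gamma_over_fact_double[OF a(1)]
    using gamma_over_fact_le_powr[of a p] gamma_over_fact_pos[of a p] a p
    by (intro mult_mono) auto
  then show ?thesis
    by (simp add: mult.assoc flip: powr_add)
qed

lemma gamma_over_fact_double_ge_powr:
  assumes a: "0 < a" "a \<le> 1" and p: "p \<ge> 1"
  shows "real p powr (2 * a - 1) \<le> 4 * gamma_over_fact (2 * a) p"
proof -
  have "real p powr a \<le> (real p + a) powr a"
    using a by (intro powr_mono2) auto
  also have "\<dots> \<le> 2 * (Gamma (real p + a + a) / Gamma (real p + a))"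
    using Gamma_add_ge_powr[of "real p + a" a] a p by (simp add: le_divide_eq)
  finally have "real p powr a * real p powr (a - 1)
      \<le> 2 * (Gamma (real p + a + a) / Gamma (real p + a)) * (2 * gamma_over_fact a p)"
    using gamma_over_fact_ge_powr[of a p] a p by (intro mult_mono) auto
  then show ?thesis
    unfolding gamma_over_fact_double[OF a(1)] by (simp add: mult_ac flip: powr_add)
qed

lemma betabin_eq_gamma_over_fact:
  assumes "0 < a" "k \<le> p"
  shows "betabin p a k =
    gamma_over_fact a k * gamma_over_fact a (p - k) / (Beta a a * gamma_over_fact (2 * a) p)"
proof -
  have "a + real p - real k = real (p - k) + a" "a + real k + (real (p - k) + a) = real p + 2 * a"
    using assms by (simp_all add: of_nat_diff)
  then show ?thesis
    using assms unfolding betabin_def Beta_def[of "a + real k"] gamma_over_fact_def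
    by (simp add: binomial_fact field_simps add.commute)
qed

lemma betabin_ge_powr:
  assumes a: "0 < a" "a \<le> 1" and p: "p \<ge> 1" and k: "k \<le> p"
  shows "1 / (8 * Beta a a) * real p powr -1 \<le> betabin p a k"
proof -
  define L where "L = real p powr (a - 1) / 2"
  have "L \<le> gamma_over_fact a p"
    using gamma_over_fact_ge_powr[of a p] a p by (simp add: L_def)
  then have "L \<le> gamma_over_fact a k" "L \<le> gamma_over_fact a (p - k)"
    using gamma_over_fact_antimono[OF a] k by (auto intro: order_trans)
  then have "L * L / (Beta a a * (2 * real p powr (2 * a - 1))) \<le> betabin p a k"
    unfolding betabin_eq_gamma_over_fact[OF a(1) k]
    using gamma_over_fact_double_le_powr[OF a p] Beta_real_pos[OF a(1) a(1)] a p
      gamma_over_fact_pos[OF a(1), of k] gamma_over_fact_pos[OF a(1), of "p - k"]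
      gamma_over_fact_pos[of "2 * a" p]
    by (intro frac_le mult_mono) (auto simp: L_def)
  moreover have "real p powr (a - 1) * real p powr (a - 1) = real p powr (2 * a - 1) * real p powr -1"
    by (simp only: flip: powr_add) (rule arg_cong, simp)
  ultimately show ?thesis
    using p Beta_real_pos[OF a(1) a(1)] by (simp add: L_def field_simps)
qed

lemma gamma_over_fact_le_powr_of_le_double:
  assumes a: "0 < a" "a \<le> 1" and "p \<le> 2 * m" "p \<ge> 1"
  shows "gamma_over_fact a m \<le> 2 * real p powr (a - 1)"
proof -
  have "gamma_over_fact a m \<le> real m powr (a - 1)"
    using gamma_over_fact_le_powr[of a m] assms by simp
  also have "\<dots> \<le> (real p / 2) powr (a - 1)"
    using assms by (intro powr_mono2') auto
  also have "\<dots> = real p powr (a - 1) / 2 powr (a - 1)"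
    by (simp add: powr_divide)
  also have "\<dots> \<le> 2 * real p powr (a - 1)"
  proof -
    have "1 \<le> 2 * 2 powr (a - 1)"
      using powr_mono[of "-1" "a - 1" 2] a by (simp add: powr_minus field_simps)
    then show ?thesis
      using mult_right_mono[of 1 "2 * 2 powr (a - 1)" "real p powr (a - 1)"]
      by (simp add: divide_le_eq mult_ac)
  qed
  finally show ?thesis .
qed

lemma betabin_le_powr:
  assumes a: "0 < a" "a \<le> 1" and p: "p \<ge> 1" and k: "k \<le> p"
  shows "betabin p a k \<le> 8 * Gamma a / Beta a a * real p powr -a"
proof -
  have small: "gamma_over_fact a m \<le> Gamma a" for m
    using gamma_over_fact_antimono[OF a, of 0 m] by simp
  have "gamma_over_fact a k * gamma_over_fact a (p - k) \<le> 2 * Gamma a * real p powr (a - 1)"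
  proof (cases "p \<le> 2 * k")
    case True
    have "gamma_over_fact a k * gamma_over_fact a (p - k) \<le> 2 * real p powr (a - 1) * Gamma a"
      using gamma_over_fact_le_powr_of_le_double[OF a True p] small gamma_over_fact_pos[OF a(1)]
      by (intro mult_mono) (auto intro: less_imp_le)
    then show ?thesis
      by (simp add: mult_ac)
  next
    case False
    then have "p \<le> 2 * (p - k)"
      by linarith
    then have "gamma_over_fact a k * gamma_over_fact a (p - k) \<le> Gamma a * (2 * real p powr (a - 1))"
      using gamma_over_fact_le_powr_of_le_double[OF a _ p] small gamma_over_fact_pos[OF a(1)] a
      by (intro mult_mono) (auto intro: less_imp_le)
    then show ?thesis
      by (simp add: mult_ac)
  qed
  then have "betabin p a k
      \<le> 2 * Gamma a * real p powr (a - 1) / (Beta a a * (real p powr (2 * a - 1) / 4))"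
    unfolding betabin_eq_gamma_over_fact[OF a(1) k]
    using gamma_over_fact_double_ge_powr[OF a p] Beta_real_pos[OF a(1) a(1)] p a
    by (intro frac_le mult_left_mono) auto
  moreover have "real p powr (a - 1) = real p powr (2 * a - 1) * real p powr -a"
    by (simp only: flip: powr_add) (rule arg_cong, simp)
  ultimately show ?thesis
    using p Beta_real_pos[OF a(1) a(1)] by (simp add: field_simps)
qed

lemma probX_bounds:
  assumes a: "0 < a" "a \<le> 1" and p: "p \<ge> 1" and "i \<le> p" "j \<le> p"
  defines "c \<equiv> 1 / (8 * Beta a a)" and "C \<equiv> 8 * Gamma a / Beta a a"
  shows "c\<^sup>2 * real p powr -2 \<le> probX p a i j"
    and "probX p a i j \<le> C\<^sup>2 * real p powr (-2 * a)"
proof -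
  have lower: "c * real p powr -1 \<le> betabin p a k"
    and upper: "betabin p a k \<le> C * real p powr -a" if "k \<le> p" for k
    using betabin_ge_powr betabin_le_powr a p that by (simp_all add: c_def C_def)
  have "0 \<le> c * real p powr -1" "0 \<le> C * real p powr -a"
    using Beta_real_pos[OF a(1) a(1)] a by (simp_all add: c_def C_def)
  then have "c * real p powr -1 * (c * real p powr -1) \<le> probX p a i j"
    "probX p a i j \<le> C * real p powr -a * (C * real p powr -a)"
    unfolding probX_def
    using mult_mono[OF lower lower] mult_mono[OF upper upper] order_trans[OF _ lower]
      \<open>i \<le> p\<close> \<open>j \<le> p\<close> by blast+
  moreover have "c * real p powr -1 * (c * real p powr -1) = c\<^sup>2 * real p powr -2"
    "C * real p powr -a * (C * real p powr -a) = C\<^sup>2 * real p powr (-2 * a)"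
    using p by (simp_all add: power2_eq_square powr_minus_divide powr_numeral mult_ac flip: powr_add)
  ultimately show "c\<^sup>2 * real p powr -2 \<le> probX p a i j"
    "probX p a i j \<le> C\<^sup>2 * real p powr (-2 * a)"
    by simp_all
qed

theorem lemmaA3:
  fixes \<alpha> :: real
  assumes "0 < \<alpha>" and "\<alpha> \<le> 1"
  shows "\<exists>c C. c > 0 \<and> C > 0 \<and>
    (\<forall>p::nat. p \<ge> 1 \<longrightarrow> (\<forall>i\<le>p. \<forall>j\<le>p.
        c * real p powr (-2) \<le> probX p \<alpha> i j \<and>
        probX p \<alpha> i j \<le> C * real p powr (-2 * \<alpha>)))"
proof (intro exI conjI allI impI)
  show "(1 / (8 * Beta \<alpha> \<alpha>))\<^sup>2 > 0" "(8 * Gamma \<alpha> / Beta \<alpha> \<alpha>)\<^sup>2 > 0"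
    using Beta_real_pos[OF assms(1) assms(1)] Gamma_real_pos[OF assms(1)] by simp_all
  fix p i j :: nat
  assume "p \<ge> 1" "i \<le> p" "j \<le> p"
  then show "(1 / (8 * Beta \<alpha> \<alpha>))\<^sup>2 * real p powr (-2) \<le> probX p \<alpha> i j"
    "probX p \<alpha> i j \<le> (8 * Gamma \<alpha> / Beta \<alpha> \<alpha>)\<^sup>2 * real p powr (-2 * \<alpha>)"
    using probX_bounds assms by simp_all
qed

end
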